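(* Let $m\ge2$. Then $|U_{\beta,m}|\ge\aleph_0$ for every $\beta\in(\mathcal{G}(m),m+1]$.
   Context: For $\beta\in(1,m+1]$ and $x\in I_{\beta,m}=[0,\frac{m}{\beta-1}]$, $\Sigma_{\beta,m}(x)=\{(\epsilon_i)\in\{0,\ldots,m\}^{\mathbb{N}}:\sum_{i\ge1}\epsilon_i\beta^{-i}=x\}$, and $U_{\beta,m}=\{x\in I_{\beta,m}:|\Sigma_{\beta,m}(x)|=1\}$. $\mathcal{G}(m)=k+1$ if $m=2k$ and $\mathcal{G}(m)=\frac{k+1+\sqrt{k^2+6k+5}}{2}$ if $m=2k+1$. *)

theory Defs
  imports "HOL-Analysis.Analysis"
begin

text \<open>Digit sequences are indexed from 0 here: the sequence e corresponds to
  (epsilon_i)_{i>=1} with epsilon_i = e (i - 1). Hence the value is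
  sum_{i>=0} e i * beta^{-(i+1)}.\<close>

definition Ibm :: "real \<Rightarrow> nat \<Rightarrow> real set" where
  "Ibm \<beta> m = {0 .. real m / (\<beta> - 1)}"

definition Sigma_bm :: "real \<Rightarrow> nat \<Rightarrow> real \<Rightarrow> (nat \<Rightarrow> nat) set" where
  "Sigma_bm \<beta> m x = {e. (\<forall>i. e i \<le> m) \<and> (\<lambda>i. real (e i) / \<beta> ^ (Suc i)) sums x}"

definition U_bm :: "real \<Rightarrow> nat \<Rightarrow> real set" where
  "U_bm \<beta> m = {x \<in> Ibm \<beta> m. card (Sigma_bm \<beta> m x) = 1 \<and> finite (Sigma_bm \<beta> m x)}"

definition G :: "nat \<Rightarrow> real" where
  "G m = (if even m then real (m div 2) + 1
          else (let k = real (m div 2) in (k + 1 + sqrt (k^2 + 6*k + 5)) / 2))"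

end

theory Submission
  imports Defs
begin

text \<open>Let a = \<lceil>m/2\<rceil> and b = \<lfloor>m/2\<rfloor>. The digit sequence 0^N (a b a b ...) has the
  value A / \<beta>^N with A = (a\<beta> + b)/(\<beta>^2 - 1), and its tails only take the values
  A and B = (b\<beta> + a)/(\<beta>^2 - 1), where A + B = m/(\<beta> - 1). An expansion is unique as
  soon as every tail after a digit below m is smaller than 1 and every tail after a nonzero
  digit exceeds m/(\<beta> - 1) - 1; here both conditions reduce to A < 1, i.e.
  a\<beta> + b + 1 < \<beta>^2, and G m is exactly the largest root of \<beta>^2 = a\<beta> + b + 1.
  So the infinitely many points A / \<beta>^N all lie in U_bm \<beta> m.\<close>

definition expansion_tail :: "real \<Rightarrow> (nat \<Rightarrow> nat) \<Rightarrow> nat \<Rightarrow> real" where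
  "expansion_tail \<beta> e k = (\<Sum>i. real (e (k + i)) / \<beta> ^ Suc i)"

lemma sums_geometric_Suc:
  fixes \<beta> c :: real
  assumes "\<beta> > 1"
  shows "(\<lambda>i. c / \<beta> ^ Suc i) sums (c / (\<beta> - 1))"
proof -
  have "(\<lambda>i. (c / \<beta>) * (1 / \<beta>) ^ i) sums ((c / \<beta>) * (1 / (1 - 1 / \<beta>)))"
    using assms by (intro sums_mult geometric_sums) auto
  moreover have "(c / \<beta>) * (1 / (1 - 1 / \<beta>)) = c / (\<beta> - 1)"
    using assms by (simp add: field_simps)
  moreover have "(\<lambda>i. (c / \<beta>) * (1 / \<beta>) ^ i) = (\<lambda>i. c / \<beta> ^ Suc i)"
    by (simp add: power_divide)
  ultimately show ?thesis
    by metis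
qed

lemma summable_expansion_tail:
  assumes "\<beta> > 1" "\<forall>i. e i \<le> m"
  shows "summable (\<lambda>i. real (e (k + i)) / \<beta> ^ Suc i)"
proof (rule summable_comparison_test')
  show "summable (\<lambda>i. real m / \<beta> ^ Suc i)"
    using sums_geometric_Suc[OF assms(1)] by (rule sums_summable)
  show "norm (real (e (k + n)) / \<beta> ^ Suc n) \<le> real m / \<beta> ^ Suc n" for n
    using assms by (auto intro!: divide_right_mono)
qed

lemma expansion_tail_nonneg:
  assumes "\<beta> > 1" "\<forall>i. e i \<le> m"
  shows "0 \<le> expansion_tail \<beta> e k"
  unfolding expansion_tail_def using assms
  by (intro suminf_nonneg summable_expansion_tail) auto

lemma expansion_tail_le:
  assumes "\<beta> > 1" "\<forall>i. e i \<le> m"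
  shows "expansion_tail \<beta> e k \<le> real m / (\<beta> - 1)"
proof -
  have "expansion_tail \<beta> e k \<le> (\<Sum>i. real m / \<beta> ^ Suc i)"
    unfolding expansion_tail_def using assms sums_geometric_Suc[OF assms(1)]
    by (intro suminf_le summable_expansion_tail sums_summable) (auto intro!: divide_right_mono)
  also have "\<dots> = real m / (\<beta> - 1)"
    using sums_geometric_Suc[OF assms(1)] by (rule sums_unique[symmetric])
  finally show ?thesis .
qed

lemma expansion_tail_Suc:
  assumes "\<beta> > 1" "\<forall>i. e i \<le> m"
  shows "expansion_tail \<beta> e k = (real (e k) + expansion_tail \<beta> e (Suc k)) / \<beta>"
proof -
  have "(\<Sum>i. real (e (k + Suc i)) / \<beta> ^ Suc (Suc i)) = expansion_tail \<beta> e k - real (e k) / \<beta>"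
    using suminf_split_head[OF summable_expansion_tail[OF assms]]
    unfolding expansion_tail_def by simp
  moreover have "(\<Sum>i. real (e (k + Suc i)) / \<beta> ^ Suc (Suc i)) = expansion_tail \<beta> e (Suc k) / \<beta>"
    using suminf_divide[OF summable_expansion_tail[OF assms, of "Suc k"], of \<beta>]
    unfolding expansion_tail_def by (simp add: field_simps)
  ultimately show ?thesis
    using assms by (simp add: field_simps)
qed

lemma Sigma_bm_iff:
  assumes "\<beta> > 1"
  shows "d \<in> Sigma_bm \<beta> m x \<longleftrightarrow> (\<forall>i. d i \<le> m) \<and> x = expansion_tail \<beta> d 0"
  using assms summable_expansion_tail[of \<beta> d m 0]
  unfolding Sigma_bm_def expansion_tail_def
  by (auto simp: sums_iff)

text \<open>Tails are characterised as the bounded solution of their recursion: the difference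
  of two solutions gets multiplied by \<beta> at each step.\<close>

lemma expansion_tail_eq_bounded_solution:
  assumes b: "\<beta> > 1" and digits: "\<forall>i. e i \<le> m"
    and rec: "\<forall>k. W k = (real (e k) + W (Suc k)) / \<beta>"
    and bounded: "\<forall>k. \<bar>W k\<bar> \<le> M"
  shows "W k = expansion_tail \<beta> e k"
proof -
  define D where "D k = expansion_tail \<beta> e k - W k" for k
  have D_Suc: "D k = D (Suc k) / \<beta>" for k
    unfolding D_def using expansion_tail_Suc[OF b digits, of k] rec b by (simp add: field_simps)
  have D_shift: "D k = D (k + n) / \<beta> ^ n" for n k
  proof (induction n arbitrary: k)
    case 0
    then show ?case by simp
  next
    case (Suc n)
    have "D k = D (Suc k + n) / \<beta> ^ n / \<beta>"
      using D_Suc[of k] Suc.IH[of "Suc k"] by simp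
    then show ?case by (simp add: field_simps)
  qed
  define C where "C = M + real m / (\<beta> - 1)"
  have D_bounded: "\<bar>D j\<bar> \<le> C" for j
    unfolding D_def C_def
    using expansion_tail_nonneg[OF b digits] expansion_tail_le[OF b digits] bounded[rule_format, of j]
    by (smt (verit))
  have D_le: "\<bar>D k\<bar> \<le> C * inverse (\<beta> ^ n)" for n
  proof -
    have "\<bar>D k\<bar> = \<bar>D (k + n)\<bar> / \<beta> ^ n"
      using D_shift[of k n] b by simp
    also have "\<dots> \<le> C / \<beta> ^ n"
      using D_bounded[of "k + n"] b by (intro divide_right_mono) auto
    finally show ?thesis
      by (simp add: divide_inverse)
  qed
  have "(\<lambda>n. C * inverse (\<beta> ^ n)) \<longlonglongrightarrow> C * 0"
    using LIMSEQ_inverse_realpow_zero[OF b] by (intro tendsto_mult tendsto_const)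
  then have "\<bar>D k\<bar> \<le> 0"
    using D_le by (intro LIMSEQ_le_const) auto
  then show ?thesis
    unfolding D_def by simp
qed

lemma expansion_tail_at_first_difference:
  assumes b: "\<beta> > 1" and "\<forall>i. d i \<le> m" "\<forall>i. e i \<le> m"
    and same_value: "expansion_tail \<beta> d 0 = expansion_tail \<beta> e 0"
    and agree: "\<forall>k < n. d k = e k"
  shows "real (d n) + expansion_tail \<beta> d (Suc n) = real (e n) + expansion_tail \<beta> e (Suc n)"
proof -
  have "k \<le> n \<Longrightarrow> expansion_tail \<beta> d k = expansion_tail \<beta> e k" for k
  proof (induction k)
    case 0
    show ?case using same_value .
  next
    case (Suc k)
    then show ?case
      using agree expansion_tail_Suc[OF b assms(2), of k] expansion_tail_Suc[OF b assms(3), of k] b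
      by (simp add: field_simps)
  qed
  then show ?thesis
    using expansion_tail_Suc[OF b assms(2), of n] expansion_tail_Suc[OF b assms(3), of n] b
    by (simp add: field_simps)
qed

lemma Sigma_bm_singleton:
  assumes b: "\<beta> > 1" and digits: "\<forall>i. e i \<le> m"
    and tail_small: "\<forall>n. e n < m \<longrightarrow> expansion_tail \<beta> e (Suc n) < 1"
    and tail_large: "\<forall>n. 0 < e n \<longrightarrow> real m / (\<beta> - 1) - 1 < expansion_tail \<beta> e (Suc n)"
  shows "Sigma_bm \<beta> m (expansion_tail \<beta> e 0) = {e}"
proof -
  have "d = e" if d: "d \<in> Sigma_bm \<beta> m (expansion_tail \<beta> e 0)" for d
  proof (rule ccontr)
    assume "d \<noteq> e"
    then obtain j where "d j \<noteq> e j" by auto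
    define n where "n = (LEAST j. d j \<noteq> e j)"
    have differ: "d n \<noteq> e n"
      using \<open>d j \<noteq> e j\<close> unfolding n_def by (rule LeastI)
    have d_digits: "\<forall>i. d i \<le> m" and same_value: "expansion_tail \<beta> d 0 = expansion_tail \<beta> e 0"
      using d unfolding Sigma_bm_iff[OF b] by simp_all
    have "\<forall>k < n. d k = e k"
      unfolding n_def using not_less_Least by blast
    then have key: "real (d n) + expansion_tail \<beta> d (Suc n) = real (e n) + expansion_tail \<beta> e (Suc n)"
      by (rule expansion_tail_at_first_difference[OF b d_digits digits same_value])
    have d_tail_bounds: "0 \<le> expansion_tail \<beta> d (Suc n)" "expansion_tail \<beta> d (Suc n) \<le> real m / (\<beta> - 1)"
      by (rule expansion_tail_nonneg[OF b d_digits] expansion_tail_le[OF b d_digits])+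
    show False
    proof (cases "e n < d n")
      case True
      then have "e n < m" "real (e n) + 1 \<le> real (d n)"
        using d_digits[rule_format, of n] by linarith+
      then show False
        using key tail_small[rule_format, of n] d_tail_bounds by linarith
    next
      case False
      then have "0 < e n" "real (d n) + 1 \<le> real (e n)"
        using differ by linarith+
      then show False
        using key tail_large[rule_format, of n] d_tail_bounds by linarith
    qed
  qed
  moreover have "e \<in> Sigma_bm \<beta> m (expansion_tail \<beta> e 0)"
    using Sigma_bm_iff[OF b] digits by auto
  ultimately show ?thesis by blast
qed

definition shifted_alternating :: "nat \<Rightarrow> nat \<Rightarrow> nat \<Rightarrow> nat \<Rightarrow> nat" where
  "shifted_alternating N a b i = (if i < N then 0 else if even (i - N) then a else b)"

definition alternating_value :: "real \<Rightarrow> nat \<Rightarrow> nat \<Rightarrow> real" where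
  "alternating_value \<beta> a b = (real a * \<beta> + real b) / (\<beta>\<^sup>2 - 1)"

lemma one_less_power2: "(\<beta> :: real) > 1 \<Longrightarrow> 1 < \<beta>\<^sup>2"
  using less_1_mult[of \<beta> \<beta>] by (simp add: power2_eq_square)

lemma alternating_value_nonneg:
  "\<beta> > 1 \<Longrightarrow> 0 \<le> alternating_value \<beta> a b"
  unfolding alternating_value_def using one_less_power2[of \<beta>] by simp

lemma alternating_value_divide_power_le:
  assumes "\<beta> > 1"
  shows "alternating_value \<beta> a b / \<beta> ^ j \<le> alternating_value \<beta> a b"
  using alternating_value_nonneg[OF assms, of a b] assms
  by (simp add: divide_le_eq one_le_power mult_le_cancel_left1)

lemma alternating_value_times:
  assumes "\<beta> > 1"
  shows "alternating_value \<beta> a b * \<beta> = real a + alternating_value \<beta> b a"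
  using one_less_power2[OF assms] unfolding alternating_value_def
  by (simp add: field_simps power2_eq_square)

lemma alternating_value_add_swap:
  assumes "\<beta> > 1"
  shows "alternating_value \<beta> a b + alternating_value \<beta> b a = real (a + b) / (\<beta> - 1)"
proof -
  have "alternating_value \<beta> a b + alternating_value \<beta> b a = real (a + b) * (\<beta> + 1) / (\<beta>\<^sup>2 - 1)"
    unfolding alternating_value_def by (simp add: add_divide_distrib[symmetric] algebra_simps)
  also have "\<beta>\<^sup>2 - 1 = (\<beta> + 1) * (\<beta> - 1)"
    by (simp add: power2_eq_square algebra_simps)
  finally show ?thesis
    using assms by simp
qed

lemma alternating_value_swap_le:
  assumes "\<beta> > 1" "b \<le> a"
  shows "alternating_value \<beta> b a \<le> alternating_value \<beta> a b"
proof -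
  have "0 \<le> (real a - real b) * (\<beta> - 1)"
    using assms by simp
  then show ?thesis
    unfolding alternating_value_def using one_less_power2[OF assms(1)]
    by (intro divide_right_mono) (auto simp: algebra_simps)
qed

lemma expansion_tail_shifted_alternating:
  assumes b: "\<beta> > 1" and "a \<le> m" "b \<le> m"
  shows "expansion_tail \<beta> (shifted_alternating N a b) k =
    (if k < N then alternating_value \<beta> a b / \<beta> ^ (N - k)
     else if even (k - N) then alternating_value \<beta> a b else alternating_value \<beta> b a)"
    (is "_ = ?W k")
proof (rule expansion_tail_eq_bounded_solution[symmetric, OF b])
  let ?A = "alternating_value \<beta> a b" and ?B = "alternating_value \<beta> b a"
  show "\<forall>i. shifted_alternating N a b i \<le> m"
    using assms unfolding shifted_alternating_def by auto
  show "\<forall>k. ?W k = (real (shifted_alternating N a b k) + ?W (Suc k)) / \<beta>"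
  proof
    fix k
    consider "Suc k < N" | "Suc k = N" | "N \<le> k" by linarith
    then show "?W k = (real (shifted_alternating N a b k) + ?W (Suc k)) / \<beta>"
    proof cases
      case 1
      then have "N - k = Suc (N - Suc k)" by simp
      then show ?thesis using 1 unfolding shifted_alternating_def by simp
    next
      case 2
      then show ?thesis unfolding shifted_alternating_def by auto
    next
      case 3
      then have "Suc k - N = Suc (k - N)" by simp
      then show ?thesis
        using 3 b alternating_value_times[OF b, of a b] alternating_value_times[OF b, of b a]
        unfolding shifted_alternating_def by (auto simp: field_simps)
    qed
  qed
  show "\<forall>k. \<bar>?W k\<bar> \<le> ?A + ?B"
    using alternating_value_divide_power_le[OF b] alternating_value_nonneg[OF b] b
    by (simp add: add_increasing2)
qed

lemma shifted_alternating_value_in_U_bm: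
  assumes b: "\<beta> > 1" and "b \<le> a" "a + b = m"
    and root_bound: "real a * \<beta> + real b + 1 < \<beta>\<^sup>2"
  shows "alternating_value \<beta> a b / \<beta> ^ N \<in> U_bm \<beta> m"
proof -
  let ?e = "shifted_alternating N a b"
  let ?A = "alternating_value \<beta> a b" and ?B = "alternating_value \<beta> b a"
  have digits: "\<forall>i. ?e i \<le> m"
    using assms(3) unfolding shifted_alternating_def by simp
  have tail: "expansion_tail \<beta> ?e k = (if k < N then ?A / \<beta> ^ (N - k)
      else if even (k - N) then ?A else ?B)" for k
    using assms(3) by (intro expansion_tail_shifted_alternating[OF b, of _ m]) simp_all
  have "?A < 1"
    using root_bound one_less_power2[OF b] unfolding alternating_value_def by (simp add: divide_less_eq)
  moreover have "?B \<le> ?A" "?A + ?B = real m / (\<beta> - 1)"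
    using alternating_value_swap_le[OF b] alternating_value_add_swap[OF b] assms by auto
  ultimately have "?A < 1" "?B < 1" "real m / (\<beta> - 1) - 1 < ?A" "real m / (\<beta> - 1) - 1 < ?B"
    by linarith+
  then have tail_small: "expansion_tail \<beta> ?e k < 1"
    and tail_large: "N \<le> k \<Longrightarrow> real m / (\<beta> - 1) - 1 < expansion_tail \<beta> ?e k" for k
    unfolding tail using alternating_value_divide_power_le[OF b, of a b "N - k"] by auto
  have "N \<le> Suc n" if "0 < ?e n" for n
    using that unfolding shifted_alternating_def by (auto split: if_splits)
  then have "Sigma_bm \<beta> m (expansion_tail \<beta> ?e 0) = {?e}"
    using tail_small tail_large by (intro Sigma_bm_singleton[OF b digits]) auto
  moreover have "expansion_tail \<beta> ?e 0 \<in> Ibm \<beta> m"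
    using expansion_tail_nonneg[OF b digits] expansion_tail_le[OF b digits] by (simp add: Ibm_def)
  moreover have "expansion_tail \<beta> ?e 0 = ?A / \<beta> ^ N"
    unfolding tail by simp
  ultimately show ?thesis
    unfolding U_bm_def by simp
qed

lemma infinite_U_bm_if_alternating_root_bound:
  assumes b: "\<beta> > 1" and "0 < a" "b \<le> a" "a + b = m"
    and "real a * \<beta> + real b + 1 < \<beta>\<^sup>2"
  shows "infinite (U_bm \<beta> m)"
proof -
  let ?A = "alternating_value \<beta> a b"
  have "?A > 0"
    using assms one_less_power2[OF b] unfolding alternating_value_def by (simp add: add_pos_nonneg)
  then have "inj (\<lambda>N. ?A / \<beta> ^ N)"
    using b by (auto intro!: injI simp: power_inject_exp)
  then have "infinite (range (\<lambda>N. ?A / \<beta> ^ N))"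
    by (simp add: finite_image_iff)
  moreover have "range (\<lambda>N. ?A / \<beta> ^ N) \<subseteq> U_bm \<beta> m"
    using shifted_alternating_value_in_U_bm assms by blast
  ultimately show ?thesis
    using finite_subset by blast
qed

text \<open>For m = 2k the bound reads (\<beta> + 1)(\<beta> - k - 1) > 0; for m = 2k + 1 it reads
  (2\<beta> - k - 1)^2 > k^2 + 6k + 5.\<close>

lemma G_less_imp_alternating_root_bound:
  fixes m :: nat and \<beta> :: real
  assumes "m \<ge> 2" and "G m < \<beta>"
  shows "\<beta> > 1 \<and> real (m - m div 2) * \<beta> + real (m div 2) + 1 < \<beta>\<^sup>2"
proof (cases "even m")
  case True
  then obtain k where k: "m = 2 * k" by auto
  then have "k \<ge> 1" "\<beta> > real k + 1"
    using assms True unfolding G_def by auto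
  moreover from this have "(\<beta> + 1) * (\<beta> - real k - 1) > 0"
    by (intro mult_pos_pos) auto
  ultimately show ?thesis
    using k by (simp add: power2_eq_square algebra_simps)
next
  case False
  then obtain k where k: "m = 2 * k + 1" using oddE by blast
  define s where "s = sqrt (real k ^ 2 + 6 * real k + 5)"
  have s: "s \<ge> 1" "s\<^sup>2 = real k ^ 2 + 6 * real k + 5"
    unfolding s_def by simp_all
  have "2 * \<beta> - (real k + 1) > s"
    using assms False k unfolding G_def s_def by (simp add: Let_def)
  moreover from this have "s\<^sup>2 < (2 * \<beta> - (real k + 1))\<^sup>2"
    using s by (intro power_strict_mono) auto
  ultimately show ?thesis
    using k s by (simp add: power2_eq_square algebra_simps)
qed

theorem proposition4p3:
  fixes m :: nat and \<beta> :: real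
  assumes "m \<ge> 2" and "G m < \<beta>" and "\<beta> \<le> real m + 1"
  shows "infinite (U_bm \<beta> m)"
  using G_less_imp_alternating_root_bound[OF assms(1,2)] assms(1)
  by (intro infinite_U_bm_if_alternating_root_bound[where a = "m - m div 2" and b = "m div 2"]) auto

end
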